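(* Let $b\ge3$, $1\le j\le b-1$, $\ell\in\{2,\dots,b\}$. For $i=1,\dots,\ell$ let $I_i=[a_i,b_i]\subseteq[0,1]$ be nonempty intervals, fix numbers $\bar p_{\ell+1},\dots,\bar p_b$, and fix a probability vector $\bar q\in\mathbb R^b$ with $\bar q_1=\bar q_2=\dots=\bar q_\ell$. Let $D$ be the set of pairs $(p,\bar q)$ where $p$ is a probability vector in $\mathbb R^b$ with $p_i\in I_i$ for $i\le\ell$ and $p_i=\bar p_i$ for $i>\ell$. If $(\bar p;\bar q)\in D$ is a maximum point of $\Psi_j$ on $D$, then either $\bar p_1=\bar p_2=\dots=\bar p_\ell$, or the maximum of $\Psi_j$ on $D$ is also attained at some point $(p';\bar q)\in D$ with $p'_i\in\{a_i,b_i\}$ for some $i\in\{1,\dots,\ell\}$.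
   Context: For an integer $1\le j\le b-1$ and vectors $p,q\in\mathbb R^b$, $$\Psi_j(p;q)=\frac{1}{(b-j-1)!}\sum_{\sigma\in S_b}\Big(p_{\sigma(1)}\cdots p_{\sigma(j)}\,q_{\sigma(j+1)}+q_{\sigma(1)}\cdots q_{\sigma(j)}\,p_{\sigma(j+1)}\Big),$$ where $S_b$ is the set of permutations of $\{1,\dots,b\}$. *)

theory Defs
  imports "HOL-Analysis.Analysis" "HOL-Combinatorics.Permutations"
begin

text \<open>Vectors in R^b are represented as functions nat => real, indexed by {1..b}.\<close>

definition Psi :: "nat \<Rightarrow> nat \<Rightarrow> (nat \<Rightarrow> real) \<Rightarrow> (nat \<Rightarrow> real) \<Rightarrow> real" where
  "Psi b j p q = (1 / fact (b - j - 1)) *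
     (\<Sum>\<sigma> | \<sigma> permutes {1..b}.
        (\<Prod>k=1..j. p (\<sigma> k)) * q (\<sigma> (j+1)) + (\<Prod>k=1..j. q (\<sigma> k)) * p (\<sigma> (j+1)))"

definition prob_vec :: "nat \<Rightarrow> (nat \<Rightarrow> real) \<Rightarrow> bool" where
  "prob_vec b p \<longleftrightarrow> (\<forall>i\<in>{1..b}. 0 \<le> p i) \<and> (\<Sum>i=1..b. p i) = 1"

text \<open>The first components of the pairs in D (the second component is always qbar).\<close>
definition Dset :: "nat \<Rightarrow> nat \<Rightarrow> (nat \<Rightarrow> real) \<Rightarrow> (nat \<Rightarrow> real) \<Rightarrow> (nat \<Rightarrow> real) \<Rightarrow> (nat \<Rightarrow> real) set" where
  "Dset b l a bb pbar = {p. prob_vec b p \<and> (\<forall>i\<in>{1..l}. a i \<le> p i \<and> p i \<le> bb i)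
                          \<and> (\<forall>i\<in>{l+1..b}. p i = pbar i)}"

end

theory Submission imports Defs "HOL-Computational_Algebra.Polynomial" begin

text \<open>Suppose \<open>pbar i \<noteq> pbar 1\<close> for some \<open>i \<le> l\<close> and shift mass \<open>t\<close> from coordinate 1 to
coordinate \<open>i\<close>. Since \<open>Psi\<close> is affine in each coordinate of \<open>p\<close>, it is a quadratic \<open>f t\<close>
along this line; since \<open>qbar 1 = qbar i\<close>, swapping the two coordinates is a symmetry of \<open>Psi\<close>,
giving \<open>f t = f (d - t)\<close> with \<open>d = pbar 1 - pbar i \<noteq> 0\<close>. A quadratic symmetric about
\<open>d/2 \<noteq> 0\<close> with a local maximum at \<open>0\<close> is constant, so the maximum persists as \<open>t\<close> moves
until one of the two coordinates hits an endpoint of its interval.\<close>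

lemma Psi_permutes_invariant:
  assumes "\<tau> permutes {1..b}" and "\<And>x. q (\<tau> x) = q x"
  shows "Psi b j (p \<circ> \<tau>) q = Psi b j p q"
proof -
  let ?F = "\<lambda>\<sigma>. (\<Prod>k=1..j. p (\<sigma> k)) * q (\<sigma> (j+1)) + (\<Prod>k=1..j. q (\<sigma> k)) * p (\<sigma> (j+1))"
  have "sum ?F {\<sigma>. \<sigma> permutes {1..b}} = sum (\<lambda>\<sigma>. ?F (\<tau> \<circ> \<sigma>)) {\<sigma>. \<sigma> permutes {1..b}}"
    by (rule setum_permutations_compose_left[OF assms(1)])
  then show ?thesis unfolding Psi_def by (simp add: assms(2))
qed

lemma Psi_along_line_poly:
  assumes "finite W" and "\<And>x. x \<notin> W \<Longrightarrow> w x = 0"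
  shows "\<exists>P. degree P \<le> max 1 (card W) \<and> (\<forall>t. Psi b j (\<lambda>x. p x + w x * t) q = poly P t)"
proof -
  let ?line = "\<lambda>x. [:p x, w x:]"
  define P where "P = smult (1 / fact (b - j - 1)) (\<Sum>\<sigma> | \<sigma> permutes {1..b}.
        (\<Prod>k=1..j. ?line (\<sigma> k)) * [:q (\<sigma> (j+1)):] + [:\<Prod>k=1..j. q (\<sigma> k):] * ?line (\<sigma> (j+1)))"
  have "Psi b j (\<lambda>x. p x + w x * t) q = poly P t" for t
    unfolding P_def Psi_def by (simp add: poly_sum poly_prod algebra_simps)
  moreover have "degree P \<le> max 1 (card W)"
    unfolding P_def
  proof (rule order_trans[OF degree_smult_le], rule degree_sum_le)
    fix \<sigma> assume "\<sigma> \<in> {\<sigma>. \<sigma> permutes {1..b}}"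
    then have \<sigma>: "\<sigma> permutes {1..b}" by simp
    let ?A = "{k \<in> {1..j}. w (\<sigma> k) \<noteq> 0}"
    have "?A \<subseteq> inv \<sigma> ` W"
    proof
      fix k assume "k \<in> ?A"
      then have "\<sigma> k \<in> W" using assms(2) by auto
      then show "k \<in> inv \<sigma> ` W" by (metis image_eqI permutes_inverses(2)[OF \<sigma>])
    qed
    then have card_A: "card ?A \<le> card W"
      using card_mono[OF finite_imageI[OF assms(1)]] card_image_le[OF assms(1), of "inv \<sigma>"]
      by (meson order_trans)
    have "degree (\<Prod>k=1..j. ?line (\<sigma> k)) \<le> (\<Sum>k=1..j. degree (?line (\<sigma> k)))"
      using degree_prod_sum_le[of "{1..j}" "\<lambda>k. ?line (\<sigma> k)"] by (simp add: o_def)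
    also have "\<dots> \<le> (\<Sum>k=1..j. if w (\<sigma> k) = 0 then 0 else 1)"
      by (rule sum_mono) simp
    also have "\<dots> = card ?A"
      by (simp add: sum.If_cases; rule arg_cong[of _ _ card]; auto)
    finally have "degree ((\<Prod>k=1..j. ?line (\<sigma> k)) * [:q (\<sigma> (j+1)):]) \<le> max 1 (card W)"
      using card_A order_trans[OF degree_mult_le] by fastforce
    moreover have "degree ([:\<Prod>k=1..j. q (\<sigma> k):] * ?line (\<sigma> (j+1))) \<le> max 1 (card W)"
      using order_trans[OF degree_mult_le] by fastforce
    ultimately show "degree ((\<Prod>k=1..j. ?line (\<sigma> k)) * [:q (\<sigma> (j+1)):]
        + [:\<Prod>k=1..j. q (\<sigma> k):] * ?line (\<sigma> (j+1))) \<le> max 1 (card W)"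
      by (rule degree_add_le)
  qed (simp add: finite_permutations)
  ultimately show ?thesis by blast
qed

lemma poly_degree_le_2_eq:
  fixes P :: "real poly"
  assumes "degree P \<le> 2"
  shows "poly P t = coeff P 0 + coeff P 1 * t + coeff P 2 * t^2"
proof -
  have "poly P t = (\<Sum>i\<le>2. coeff P i * t ^ i)"
    unfolding poly_altdef by (rule sum.mono_neutral_left) (use assms le_degree in auto)
  then show ?thesis by (simp add: numeral_2_eq_2)
qed

lemma quadratic_constant_if_symmetric_local_max:
  fixes f :: "real \<Rightarrow> real"
  assumes f: "\<And>t. f t = c0 + c1 * t + c2 * t^2"
    and symm: "f d = f 0"
    and max: "\<And>t. lo \<le> t \<Longrightarrow> t \<le> hi \<Longrightarrow> f t \<le> f 0"
    and "d \<noteq> 0" "lo < 0" "0 < hi"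
  shows "f t = f 0"
proof -
  have "d * (c1 + c2 * d) = 0"
    using symm by (simp add: f power2_eq_square algebra_simps)
  then have c1: "c1 = - c2 * d"
    using \<open>d \<noteq> 0\<close> by simp
  have f_shifted: "f s - f 0 = c2 * (s * (s - d))" for s
    by (simp add: f c1 power2_eq_square algebra_simps)
  define e where "e = min (min hi (-lo)) (\<bar>d\<bar>/2)"
  have e: "0 < e" "e < \<bar>d\<bar>" "lo \<le> e" "e \<le> hi" "lo \<le> -e" "-e \<le> hi"
    using assms(4-6) by (auto simp: e_def)
  define u v where "u = e * (e - d)" and "v = - e * (- e - d)"
  have "e^2 < \<bar>d\<bar>^2"
    using e by (intro power_strict_mono) auto
  then have "u * v < 0"
    using e(1) by (simp add: u_def v_def power2_eq_square algebra_simps mult_less_0_iff)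
  moreover have "c2 * u \<le> 0" "c2 * v \<le> 0"
    using max[of e] max[of "-e"] e f_shifted[of e] f_shifted[of "-e"] by (auto simp: u_def v_def)
  then have "0 \<le> c2^2 * (u * v)"
    using mult_nonpos_nonpos[of "c2 * u" "c2 * v"] by (simp add: power2_eq_square algebra_simps)
  ultimately have "c2 = 0"
    by (metis mult_pos_neg not_le power2_less_eq_zero_iff not_less_iff_gr_or_eq zero_le_power2 le_less)
  then show ?thesis
    using f_shifted c1 by simp
qed

definition mass_shift :: "nat \<Rightarrow> nat \<Rightarrow> nat \<Rightarrow> real" where
  "mass_shift i k x = (if x = i then 1 else if x = k then -1 else 0)"

lemma sum_mass_shift:
  assumes "i \<in> {1..b}" "k \<in> {1..b}" "i \<noteq> k"
  shows "(\<Sum>x=1..b. mass_shift i k x) = 0"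
proof -
  have "(\<Sum>x=1..b. mass_shift i k x) = (\<Sum>x\<in>{i,k}. mass_shift i k x)"
    by (rule sum.mono_neutral_right) (use assms in \<open>auto simp: mass_shift_def\<close>)
  then show ?thesis using assms(3) by (simp add: mass_shift_def)
qed

lemma Psi_mass_shift_quadratic:
  "\<exists>c0 c1 c2. \<forall>t. Psi b j (\<lambda>x. p x + mass_shift i k x * t) q = c0 + c1 * t + c2 * t^2"
proof -
  have "card {i, k} \<le> 2"
    by (simp add: card_insert_if)
  then obtain P where "degree P \<le> 2" "\<forall>t. Psi b j (\<lambda>x. p x + mass_shift i k x * t) q = poly P t"
    using Psi_along_line_poly[of "{i, k}" "mass_shift i k"] by (force simp: mass_shift_def)
  then show ?thesis
    using poly_degree_le_2_eq by metis
qed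

lemma Psi_mass_shift_reflect:
  assumes "i \<in> {1..b}" "k \<in> {1..b}" "i \<noteq> k" and "q i = q k"
  shows "Psi b j (\<lambda>x. p x + mass_shift i k x * (p k - p i - t)) q
       = Psi b j (\<lambda>x. p x + mass_shift i k x * t) q"
proof -
  let ?\<tau> = "Transposition.transpose i k"
  have "(\<lambda>x. p x + mass_shift i k x * (p k - p i - t)) = (\<lambda>x. p x + mass_shift i k x * t) \<circ> ?\<tau>"
    using assms(3) by (auto simp: mass_shift_def Transposition.transpose_def)
  moreover have "q (?\<tau> x) = q x" for x
    using assms(4) by (simp add: Transposition.transpose_def)
  ultimately show ?thesis
    using Psi_permutes_invariant[OF permutes_swap_id[OF assms(1,2)]] by simp
qed

lemma mass_shift_in_Dset:
  assumes p: "p \<in> Dset b l a bb pbar" and "i \<in> {1..l}" "k \<in> {1..l}" "i \<noteq> k" "l \<le> b"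
    and a_nonneg: "0 \<le> a i" "0 \<le> a k"
    and t: "a i \<le> p i + t" "p i + t \<le> bb i" "a k \<le> p k - t" "p k - t \<le> bb k"
  shows "(\<lambda>x. p x + mass_shift i k x * t) \<in> Dset b l a bb pbar"
proof -
  have "(\<Sum>x=1..b. p x + mass_shift i k x * t) = (\<Sum>x=1..b. p x) + (\<Sum>x=1..b. mass_shift i k x) * t"
    by (simp add: sum.distrib sum_distrib_right)
  also have "\<dots> = 1"
    using p assms(2-5) sum_mass_shift[of i b k] by (simp add: Dset_def prob_vec_def)
  finally show ?thesis
    using assms by (auto simp: Dset_def prob_vec_def mass_shift_def)
qed

lemma Psi_mass_shift_constant_at_max:
  assumes "i \<in> {1..b}" "k \<in> {1..b}" "i \<noteq> k" "q i = q k" "p i \<noteq> p k"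
    and max: "\<And>t. lo \<le> t \<Longrightarrow> t \<le> hi \<Longrightarrow> Psi b j (\<lambda>x. p x + mass_shift i k x * t) q \<le> Psi b j p q"
    and "lo < 0" "0 < hi"
  shows "Psi b j (\<lambda>x. p x + mass_shift i k x * t) q = Psi b j p q"
proof -
  define f where "f t = Psi b j (\<lambda>x. p x + mass_shift i k x * t) q" for t
  have f_0: "f 0 = Psi b j p q"
    by (simp add: f_def)
  obtain c0 c1 c2 where "\<And>t. f t = c0 + c1 * t + c2 * t^2"
    using Psi_mass_shift_quadratic[of b j p i k q] unfolding f_def by blast
  moreover have "f (p k - p i - 0) = f 0"
    unfolding f_def using assms(1-4) by (rule Psi_mass_shift_reflect)
  moreover have "f t \<le> f 0" if "lo \<le> t" "t \<le> hi" for t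
    using max[OF that] by (simp add: f_def f_0)
  ultimately have "f t = f 0"
    by (rule quadratic_constant_if_symmetric_local_max) (use assms(5,7,8) in auto)
  then show ?thesis
    by (simp add: f_def f_0)
qed

theorem mainTheorem6:
  fixes b j l :: nat and a bb pbar qbar :: "nat \<Rightarrow> real"
  assumes "b \<ge> 3" and "1 \<le> j" and "j \<le> b - 1" and "2 \<le> l" and "l \<le> b"
    and "\<forall>i\<in>{1..l}. 0 \<le> a i \<and> a i \<le> bb i \<and> bb i \<le> 1"
    and "prob_vec b qbar" and "\<forall>i\<in>{1..l}. qbar i = qbar 1"
    and "pbar \<in> Dset b l a bb pbar"
    and "\<forall>p\<in>Dset b l a bb pbar. Psi b j p qbar \<le> Psi b j pbar qbar"
  shows "(\<forall>i\<in>{1..l}. pbar i = pbar 1) \<or>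
         (\<exists>p'\<in>Dset b l a bb pbar. Psi b j p' qbar = Psi b j pbar qbar \<and>
             (\<exists>i\<in>{1..l}. p' i = a i \<or> p' i = bb i))"
proof (cases "\<forall>i\<in>{1..l}. pbar i = pbar 1")
  case True
  then show ?thesis ..
next
  case False
  then obtain i where i: "i \<in> {1..l}" "pbar i \<noteq> pbar 1" by blast
  have one: "1 \<in> {1..l}" and "i \<noteq> 1" using assms(4) i by auto
  have pbar_bounds: "a x \<le> pbar x" "pbar x \<le> bb x" if "x \<in> {1..l}" for x
    using assms(9) that by (auto simp: Dset_def)
  define pt where "pt t = (\<lambda>x. pbar x + mass_shift i 1 x * t)" for t
  define lo where "lo = max (a i - pbar i) (pbar 1 - bb 1)"
  define hi where "hi = min (bb i - pbar i) (pbar 1 - a 1)"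
  have pt_in_D: "pt t \<in> Dset b l a bb pbar" if "lo \<le> t" "t \<le> hi" for t
    unfolding pt_def using that assms(5,6,9) i one \<open>i \<noteq> 1\<close>
    by (intro mass_shift_in_Dset) (auto simp: lo_def hi_def)
  have "\<exists>p'\<in>Dset b l a bb pbar. Psi b j p' qbar = Psi b j pbar qbar \<and>
             (\<exists>i\<in>{1..l}. p' i = a i \<or> p' i = bb i)"
  proof (cases "lo < 0 \<and> 0 < hi")
    case True
    have ib: "i \<in> {1..b}" and one_b: "1 \<in> {1..b}"
      using assms(5) i(1) by auto
    have "qbar i = qbar 1"
      using assms(8) i(1) by blast
    moreover have "Psi b j (pt t) qbar \<le> Psi b j pbar qbar" if "lo \<le> t" "t \<le> hi" for t
      using assms(10) pt_in_D[OF that] by blast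
    ultimately have "Psi b j (pt hi) qbar = Psi b j pbar qbar"
      unfolding pt_def using True
      by (intro Psi_mass_shift_constant_at_max[OF ib one_b \<open>i \<noteq> 1\<close> _ i(2)]) auto
    moreover have "pt hi \<in> Dset b l a bb pbar"
      using True by (intro pt_in_D) auto
    moreover have "pt hi i = bb i \<or> pt hi 1 = a 1"
      using \<open>i \<noteq> 1\<close> by (simp add: pt_def mass_shift_def hi_def min_def)
    ultimately show ?thesis
      using i(1) one by blast
  next
    case False
    then have "pbar i = a i \<or> pbar i = bb i \<or> pbar 1 = a 1 \<or> pbar 1 = bb 1"
      using pbar_bounds[OF i(1)] pbar_bounds[OF one] by (auto simp: lo_def hi_def)
    then show ?thesis
      using assms(9) i one by blast
  qed
  then show ?thesis ..
qed

end
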